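(* Let $X$ be a real Hilbert space and let $A,B$ be closed convex nonempty subsets of $X$ such that $E$ and $F$ are (nonempty and) bounded. Suppose that the couple $(A,B)$ is regular. Then the couple $(A,B)$ is $d$-stable.
   Context: $P_C$ is the metric projection onto a closed convex nonempty set $C$; $B_X$ the closed unit ball; $\mathrm{dist}(x,S)=\inf_{s\in S}\|x-s\|$, $\mathrm{dist}(S,T)=\inf_{s\in S}\mathrm{dist}(s,T)$. $E=\{a\in A:\mathrm{dist}(a,B)=\mathrm{dist}(A,B)\}$, $F=\{b\in B:\mathrm{dist}(b,A)=\mathrm{dist}(A,B)\}$, $v=P_{\overline{B-A}}(0)$ (projection of $0$ onto the closure of $B-A$). The couple $(A,B)$ (with $E,F$ nonempty) is regular if for each $\epsilon>0$ there is $\delta>0$ such that $\mathrm{dist}(x,E)\le\epsilon$ whenever $x\in X$ and $\max\{\mathrm{dist}(x,A),\mathrm{dist}(x,B-v)\}\le\delta$. Attouch–Wets convergence: for nonempty closed $C,D$ and $N\in\mathbb N$ let $e_N(C,D)=\sup_{c\in C\cap NB_X}\mathrm{dist}(c,D)$ ($0$ if $C\cap NB_X=\emptyset$) and $h_N(C,D)=\max\{e_N(C,D),e_N(D,C)\}$; $C_j\to C$ if $\lim_j h_N(C_j,C)=0$ for every $N\in\mathbb N$. Given sequences $\{A_n\},\{B_n\}$ of closed convex nonempty sets and $a_0\in X$, the perturbed alternating projections sequences are defined by $b_n=P_{B_n}(a_{n-1})$ and $a_n=P_{A_n}(b_n)$ for $n\in\mathbb N$. The couple $(A,B)$ (with $E,F$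 nonempty) is $d$-stable if for every choice of sequences $\{A_n\},\{B_n\}$ of closed convex nonempty sets converging in the Attouch–Wets sense to $A$ and $B$ respectively, and every starting point $a_0\in X$, the corresponding perturbed alternating projections sequences satisfy $\mathrm{dist}(a_n,E)\to0$ and $\mathrm{dist}(b_n,F)\to0$. *)

theory Defs
  imports "HOL-Analysis.Analysis"
begin

text \<open>Metric projection onto a set C (unique nearest point for closed convex
nonempty C in a Hilbert space).\<close>
definition metric_proj :: "'a::real_inner set \<Rightarrow> 'a \<Rightarrow> 'a" where
  "metric_proj C x = (THE y. y \<in> C \<and> (\<forall>z\<in>C. dist x y \<le> dist x z))"

definition set_dist :: "'a::metric_space set \<Rightarrow> 'a set \<Rightarrow> real" where
  "set_dist S T = (INF s\<in>S. infdist s T)"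

definition near_A :: "'a::real_normed_vector set \<Rightarrow> 'a set \<Rightarrow> 'a set" where
  "near_A A B = {a \<in> A. infdist a B = set_dist A B}"

definition near_B :: "'a::real_normed_vector set \<Rightarrow> 'a set \<Rightarrow> 'a set" where
  "near_B A B = {b \<in> B. infdist b A = set_dist A B}"

definition set_diff_minkowski :: "'a::real_normed_vector set \<Rightarrow> 'a set \<Rightarrow> 'a set" where
  "set_diff_minkowski B A = {b - a | a b. a \<in> A \<and> b \<in> B}"

definition gap_vector :: "'a::real_inner set \<Rightarrow> 'a set \<Rightarrow> 'a" where
  "gap_vector A B = metric_proj (closure (set_diff_minkowski B A)) 0"

definition regular_couple :: "'a::real_inner set \<Rightarrow> 'a set \<Rightarrow> bool" where
  "regular_couple A B \<longleftrightarrow>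
     (\<forall>\<epsilon>>0. \<exists>\<delta>>0. \<forall>x.
        max (infdist x A) (infdist x ((\<lambda>b. b - gap_vector A B) ` B)) \<le> \<delta>
        \<longrightarrow> infdist x (near_A A B) \<le> \<epsilon>)"

definition aw_excess :: "nat \<Rightarrow> 'a::real_normed_vector set \<Rightarrow> 'a set \<Rightarrow> real" where
  "aw_excess N C D =
     (if C \<inter> cball 0 (real N) = {} then 0
      else (SUP c\<in>C \<inter> cball 0 (real N). infdist c D))"

definition aw_h :: "nat \<Rightarrow> 'a::real_normed_vector set \<Rightarrow> 'a set \<Rightarrow> real" where
  "aw_h N C D = max (aw_excess N C D) (aw_excess N D C)"

definition aw_converges :: "(nat \<Rightarrow> 'a::real_normed_vector set) \<Rightarrow> 'a set \<Rightarrow> bool" where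
  "aw_converges Cs C \<longleftrightarrow> (\<forall>N::nat. N \<ge> 1 \<longrightarrow> (\<lambda>j. aw_h N (Cs j) C) \<longlonglongrightarrow> 0)"

text \<open>d-stability. Sequences are indexed by n >= 1 (index 0 of As, Bs is unused);
a 0 is the starting point; b n = P_{B_n}(a (n-1)), a n = P_{A_n}(b n).\<close>
definition d_stable :: "'a::real_inner set \<Rightarrow> 'a set \<Rightarrow> bool" where
  "d_stable A B \<longleftrightarrow>
     (\<forall>As Bs. (\<forall>n\<ge>1. closed (As n) \<and> convex (As n) \<and> As n \<noteq> {}
                    \<and> closed (Bs n) \<and> convex (Bs n) \<and> Bs n \<noteq> {})
        \<and> aw_converges As A \<and> aw_converges Bs B \<longrightarrow>
       (\<forall>a0 a b. a 0 = a0 \<and>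
           (\<forall>n\<ge>1. b n = metric_proj (Bs n) (a (n - 1)) \<and> a n = metric_proj (As n) (b n))
         \<longrightarrow> (\<lambda>n. infdist (a n) (near_A A B)) \<longlonglongrightarrow> 0
           \<and> (\<lambda>n. infdist (b n) (near_B A B)) \<longlonglongrightarrow> 0))"

end

theory Submission
  imports Defs
begin

text \<open>
  Let v be the gap vector. Every e \<in> E satisfies P_B e = e + v and P_A (e + v) = e, and firm
  nonexpansiveness of P_B gives ||P_B x - (e + v)||^2 + ||x + v - P_B x||^2 \<le> ||x - e||^2.
  Hence T = P_A \<circ> P_B never increases the distance to E, and decreases it by a definite amount
  whenever x + v is at a definite distance from B; by regularity this happens when x is almost in A
  but far from E. Attouch-Wets convergence makes the perturbed projections uniformly close to P_A
  and P_B on bounded sets, so along a bounded orbit the perturbed iteration follows T up to errors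
  tending to 0, and dist(a_n, E) \<rightarrow> 0; dist(b_n, F) follows because e + v \<in> F.

  Boundedness of the orbit is where boundedness of E enters. By regularity the almost-solutions of
  x \<in> A, x + v \<in> B form a bounded set; moving along segments towards points near E then shows that
  far from E the gap between A_n and B_(n+1) grows linearly with the distance to E, so that far
  from E every step of the iteration is a contraction.
\<close>

lemma infdist_lessE:
  assumes "A \<noteq> {}" "infdist x A < r"
  obtains a where "a \<in> A" "dist x a < r"
  using assms by (auto simp: infdist_notempty cINF_less_iff)

lemma infdist_geI:
  assumes "A \<noteq> {}" "\<And>a. a \<in> A \<Longrightarrow> d \<le> dist x a"
  shows "d \<le> infdist x A"
  using assms by (auto simp: infdist_notempty intro: cINF_greatest)

lemma infdist_translate:
  fixes S :: "'a::real_normed_vector set"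
  shows "infdist x ((\<lambda>b. b - c) ` S) = infdist (x + c) S"
proof -
  have "(\<lambda>s. dist x s) ` (\<lambda>b. b - c) ` S = (\<lambda>s. dist (x + c) s) ` S"
    by (auto simp: image_image dist_norm algebra_simps)
  then show ?thesis by (simp add: infdist_def)
qed

lemma leg_le_hypotenuse_minus:
  fixes X Y R L \<delta> :: real
  assumes "X\<^sup>2 + Y\<^sup>2 \<le> R\<^sup>2" "0 < \<delta>" "\<delta> \<le> Y" "0 \<le> X" "0 \<le> R" "R \<le> L"
  shows "X \<le> R - \<delta>\<^sup>2 / (2 * L)"
proof -
  define k where "k = \<delta>\<^sup>2 / (2 * L)"
  have "\<delta>\<^sup>2 \<le> Y\<^sup>2" using assms(2,3) by (intro power_mono) auto
  then have "X\<^sup>2 \<le> R\<^sup>2 - \<delta>\<^sup>2" "\<delta>\<^sup>2 \<le> R\<^sup>2" using assms(1) zero_le_power2[of X] by linarith+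
  have "\<delta> \<le> R" using \<open>\<delta>\<^sup>2 \<le> R\<^sup>2\<close> assms(5) by (rule power2_le_imp_le)
  then have "0 < L" using assms(2,6) by linarith
  have "\<delta>\<^sup>2 \<le> R * L"
    using \<open>\<delta> \<le> R\<close> assms(2,6) mult_mono[of \<delta> R \<delta> L] by (simp add: power2_eq_square)
  moreover have "0 \<le> R * L" using assms(5) \<open>0 < L\<close> by simp
  ultimately have "\<delta>\<^sup>2 \<le> R * (2 * L)" by linarith
  then have "k \<le> R" using \<open>0 < L\<close> by (simp add: k_def pos_divide_le_eq)
  have "2 * k * R \<le> \<delta>\<^sup>2"
    using \<open>0 < L\<close> assms(5,6) mult_left_mono[of R L "\<delta>\<^sup>2"] by (simp add: k_def field_simps)
  then have "R\<^sup>2 - \<delta>\<^sup>2 \<le> (R - k)\<^sup>2"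
    by (simp add: power2_eq_square algebra_simps) (use zero_le_square[of k] in linarith)
  with \<open>X\<^sup>2 \<le> R\<^sup>2 - \<delta>\<^sup>2\<close> have "X\<^sup>2 \<le> (R - k)\<^sup>2" by linarith
  then have "X \<le> R - k" by (rule power2_le_imp_le) (use \<open>k \<le> R\<close> in simp)
  then show ?thesis unfolding k_def .
qed

lemma eventually_le_max_imp_bounded:
  fixes r :: "nat \<Rightarrow> real"
  assumes "eventually (\<lambda>n. r (Suc n) \<le> max (r n) C) sequentially"
  obtains K where "\<And>n. r n \<le> K"
proof -
  obtain N where N: "\<And>n. n \<ge> N \<Longrightarrow> r (Suc n) \<le> max (r n) C"
    using assms by (auto simp: eventually_sequentially)
  have tail: "r (N + m) \<le> max (r N) C" for m
  proof (induction m)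
    case (Suc m)
    then show ?case using N[of "N + m"] by simp
  qed simp
  have "r n \<le> max (Max (r ` {..N})) (max (r N) C)" for n
  proof (cases "n \<le> N")
    case True
    then show ?thesis by (simp add: le_max_iff_disj)
  next
    case False
    then show ?thesis using tail[of "n - N"] by (simp add: le_max_iff_disj)
  qed
  then show ?thesis using that by blast
qed

lemma eventually_le_by_descent:
  fixes g :: "nat \<Rightarrow> real"
  assumes "\<And>n. 0 \<le> g n" "0 < \<kappa>" "h \<le> \<epsilon>"
    and above: "\<And>n. n \<ge> N \<Longrightarrow> h < g n \<Longrightarrow> g (Suc n) \<le> g n - \<kappa>"
    and below: "\<And>n. n \<ge> N \<Longrightarrow> g n \<le> h \<Longrightarrow> g (Suc n) \<le> \<epsilon>"
  shows "eventually (\<lambda>n. g n \<le> \<epsilon>) sequentially"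
proof -
  have "\<exists>n\<ge>N. g n \<le> h"
  proof (rule ccontr)
    assume none: "\<not> ?thesis"
    have decay: "g (N + m) \<le> g N - m * \<kappa>" for m
    proof (induction m)
      case (Suc m)
      have "g (Suc (N + m)) \<le> g (N + m) - \<kappa>" using above[of "N + m"] none by (meson le_add1 not_le)
      with Suc show ?case by (simp add: algebra_simps)
    qed simp
    obtain m :: nat where "g N / \<kappa> < m" using reals_Archimedean2 by blast
    then show False
      using decay[of m] assms(1)[of "N + m"] \<open>0 < \<kappa>\<close> by (simp add: field_simps)
  qed
  then obtain n0 where "n0 \<ge> N" "g n0 \<le> h" by blast
  have "g (n0 + m) \<le> \<epsilon>" for m
  proof (induction m)
    case (Suc m)
    then show ?case
      using above[of "n0 + m"] below[of "n0 + m"] \<open>n0 \<ge> N\<close> \<open>0 < \<kappa>\<close> by fastforce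
  qed (use \<open>g n0 \<le> h\<close> \<open>h \<le> \<epsilon>\<close> in simp)
  then show ?thesis
    unfolding eventually_sequentially by (metis le_add_diff_inverse)
qed

lemma tendsto_zero_if_eventually_le:
  fixes f :: "nat \<Rightarrow> real"
  assumes "\<And>n. 0 \<le> f n" "\<And>\<epsilon>. 0 < \<epsilon> \<Longrightarrow> eventually (\<lambda>n. f n \<le> \<epsilon>) sequentially"
  shows "f \<longlonglongrightarrow> 0"
proof (rule order_tendstoI)
  fix a :: real assume "a < 0"
  then show "eventually (\<lambda>n. a < f n) sequentially"
    using assms(1) by (intro always_eventually allI) (meson less_le_trans)
next
  fix a :: real assume "0 < a"
  then show "eventually (\<lambda>n. f n < a) sequentially"
    using assms(2)[of "a / 2"] by (auto elim: eventually_mono)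
qed

lemma tendsto_zero_by_descent:
  fixes g err :: "nat \<Rightarrow> real"
  assumes nonneg: "\<And>n. 0 \<le> g n" and "err \<longlonglongrightarrow> 0"
    and step: "eventually (\<lambda>n. g (Suc n) \<le> g n + err n) sequentially"
    and descent: "\<And>\<epsilon>. \<epsilon> > 0 \<Longrightarrow>
      \<exists>\<kappa>>0. eventually (\<lambda>n. \<epsilon> < g n \<longrightarrow> g (Suc n) \<le> g n - \<kappa> + err n) sequentially"
  shows "g \<longlonglongrightarrow> 0"
proof (rule tendsto_zero_if_eventually_le[OF nonneg])
  fix \<epsilon> :: real assume "0 < \<epsilon>"
  then obtain \<kappa> where "0 < \<kappa>"
    and dec: "eventually (\<lambda>n. \<epsilon> / 2 < g n \<longrightarrow> g (Suc n) \<le> g n - \<kappa> + err n) sequentially"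
    using descent[of "\<epsilon> / 2"] by auto
  have small: "eventually (\<lambda>n. err n < min (\<kappa> / 2) (\<epsilon> / 2)) sequentially"
    using \<open>0 < \<kappa>\<close> \<open>0 < \<epsilon>\<close> by (intro order_tendstoD(2)[OF \<open>err \<longlonglongrightarrow> 0\<close>]) simp
  have "eventually (\<lambda>n. g (Suc n) \<le> g n + err n
      \<and> (\<epsilon> / 2 < g n \<longrightarrow> g (Suc n) \<le> g n - \<kappa> + err n) \<and> err n < min (\<kappa> / 2) (\<epsilon> / 2)) sequentially"
    by (rule eventually_conj[OF step eventually_conj[OF dec small]])
  then obtain N where N: "\<And>n. n \<ge> N \<Longrightarrow> g (Suc n) \<le> g n + err n
      \<and> (\<epsilon> / 2 < g n \<longrightarrow> g (Suc n) \<le> g n - \<kappa> + err n) \<and> err n < min (\<kappa> / 2) (\<epsilon> / 2)"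
    unfolding eventually_sequentially by blast
  show "eventually (\<lambda>n. g n \<le> \<epsilon>) sequentially"
  proof (rule eventually_le_by_descent[OF nonneg half_gt_zero[OF \<open>0 < \<kappa>\<close>], of "\<epsilon> / 2" _ N])
    show "g (Suc n) \<le> g n - \<kappa> / 2" if "n \<ge> N" "\<epsilon> / 2 < g n" for n
      using N[OF that(1)] that(2) by simp
    show "g (Suc n) \<le> \<epsilon>" if "n \<ge> N" "g n \<le> \<epsilon> / 2" for n
      using N[OF that(1)] that(2) by simp
  qed (use \<open>0 < \<epsilon>\<close> in simp)
qed

lemma parallelogram_midpoint:
  fixes x y z :: "'a::real_inner"
  shows "(norm (y - z))\<^sup>2 = 2 * (norm (x - y))\<^sup>2 + 2 * (norm (x - z))\<^sup>2 - 4 * (norm (x - (1/2) *\<^sub>R (y + z)))\<^sup>2"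
  unfolding power2_norm_eq_inner
  by (simp add: inner_diff_left inner_diff_right inner_add_left inner_add_right inner_commute algebra_simps)

lemma abs_dist_convex_combination_le:
  fixes x z p :: "'a::real_normed_vector"
  assumes "0 \<le> t" "t \<le> 1"
  shows "\<bar>dist ((1 - t) *\<^sub>R z + t *\<^sub>R x) p - t * dist x p\<bar> \<le> dist z p"
proof -
  have "(1 - t) *\<^sub>R z + t *\<^sub>R x - p = (1 - t) *\<^sub>R (z - p) + t *\<^sub>R (x - p)"
    by (simp add: algebra_simps)
  moreover have "\<bar>norm ((1 - t) *\<^sub>R (z - p) + t *\<^sub>R (x - p)) - norm (t *\<^sub>R (x - p))\<bar>
      \<le> norm ((1 - t) *\<^sub>R (z - p))"
    using norm_triangle_ineq3[of "(1 - t) *\<^sub>R (z - p) + t *\<^sub>R (x - p)" "t *\<^sub>R (x - p)"] by simp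
  moreover have "(1 - t) * norm (z - p) \<le> norm (z - p)"
    using assms by (simp add: mult_left_le_one_le)
  ultimately show ?thesis using assms by (simp add: dist_norm)
qed

lemma dist_convex_combinations_le:
  fixes x y z w u :: "'a::real_normed_vector"
  assumes "0 \<le> t" "t \<le> 1"
  shows "dist ((1 - t) *\<^sub>R z + t *\<^sub>R x + u) ((1 - t) *\<^sub>R w + t *\<^sub>R y) \<le> dist (z + u) w + t * dist (x + u) y"
proof -
  have "(1 - t) *\<^sub>R z + t *\<^sub>R x + u - ((1 - t) *\<^sub>R w + t *\<^sub>R y)
      = (1 - t) *\<^sub>R (z + u - w) + t *\<^sub>R (x + u - y)"
    by (simp add: algebra_simps)
  moreover have "(1 - t) * norm (z + u - w) \<le> norm (z + u - w)"
    using assms by (simp add: mult_left_le_one_le)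
  ultimately show ?thesis
    using norm_triangle_ineq[of "(1 - t) *\<^sub>R (z + u - w)" "t *\<^sub>R (x + u - y)"] assms
    by (simp add: dist_norm)
qed

lemma convex_pairs_at_radius:
  fixes A' B' :: "'a::real_normed_vector set"
  assumes "convex A'" "convex B'" "z \<in> A'" "w \<in> B'" "x \<in> A'" "y \<in> B'" "0 < R" "R \<le> dist x p"
  obtains x' y' where "x' \<in> A'" "y' \<in> B'" "\<bar>dist x' p - R\<bar> \<le> dist z p"
    "dist (x' + u) y' \<le> dist (z + u) w + R / dist x p * dist (x + u) y"
proof -
  define t where "t = R / dist x p"
  have "0 < dist x p" using assms(7,8) by linarith
  then have "0 < t" "t \<le> 1" "t * dist x p = R" using assms(7,8) by (simp_all add: t_def)
  define x' y' where "x' = (1 - t) *\<^sub>R z + t *\<^sub>R x" and "y' = (1 - t) *\<^sub>R w + t *\<^sub>R y"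
  have "x' \<in> A'" "y' \<in> B'"
    unfolding x'_def y'_def using assms \<open>0 < t\<close> \<open>t \<le> 1\<close> by (auto intro: convexD)
  moreover have "\<bar>dist x' p - R\<bar> \<le> dist z p"
    using abs_dist_convex_combination_le[of t z x p] \<open>0 < t\<close> \<open>t \<le> 1\<close> \<open>t * dist x p = R\<close>
    unfolding x'_def by simp
  moreover have "dist (x' + u) y' \<le> dist (z + u) w + t * dist (x + u) y"
    using dist_convex_combinations_le[of t z x u w y] \<open>0 < t\<close> \<open>t \<le> 1\<close> unfolding x'_def y'_def by simp
  ultimately show ?thesis using that unfolding t_def by blast
qed

section \<open>Metric projections onto closed convex sets\<close>

lemma minimizing_sequence_Cauchy:
  fixes x :: "'a::real_inner"
  assumes "convex C" "\<And>n. y n \<in> C" "(\<lambda>n. dist x (y n)) \<longlonglongrightarrow> infdist x C"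
  shows "Cauchy y"
proof (rule metric_CauchyI)
  fix e :: real assume "e > 0"
  define m where "m = infdist x C"
  have "(\<lambda>n. (dist x (y n))\<^sup>2 - m\<^sup>2) \<longlonglongrightarrow> m\<^sup>2 - m\<^sup>2"
    unfolding m_def by (intro tendsto_intros assms(3))
  then have "eventually (\<lambda>n. (dist x (y n))\<^sup>2 - m\<^sup>2 < e\<^sup>2 / 4) sequentially"
    using \<open>e > 0\<close> by (intro order_tendstoD(2)) auto
  then obtain N where N: "\<And>n. n \<ge> N \<Longrightarrow> (dist x (y n))\<^sup>2 - m\<^sup>2 < e\<^sup>2 / 4" by (auto simp: eventually_sequentially)
  have "dist (y i) (y j) < e" if "i \<ge> N" "j \<ge> N" for i j
  proof -
    have "(1/2) *\<^sub>R (y i + y j) \<in> C"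
      using convexD[OF assms(1) assms(2)[of i] assms(2)[of j], of "1/2" "1/2"]
      by (simp add: scaleR_add_right)
    then have "m \<le> norm (x - (1/2) *\<^sub>R (y i + y j))"
      unfolding m_def using infdist_le by (metis dist_norm)
    then have "m\<^sup>2 \<le> (norm (x - (1/2) *\<^sub>R (y i + y j)))\<^sup>2"
      by (simp add: m_def infdist_nonneg power_mono)
    then have "(norm (y i - y j))\<^sup>2 < e\<^sup>2"
      using parallelogram_midpoint[of "y i" "y j" x] N[OF \<open>i \<ge> N\<close>] N[OF \<open>j \<ge> N\<close>]
      by (simp add: dist_norm)
    then show ?thesis using \<open>e > 0\<close> by (simp add: dist_norm power_less_imp_less_base)
  qed
  then show "\<exists>N. \<forall>i\<ge>N. \<forall>j\<ge>N. dist (y i) (y j) < e" by blast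
qed

lemma closed_convex_nearest_point_exists:
  fixes C :: "'a::{real_inner,complete_space} set"
  assumes "closed C" "convex C" "C \<noteq> {}"
  shows "\<exists>y\<in>C. \<forall>z\<in>C. dist x y \<le> dist x z"
proof -
  have "\<exists>y\<in>C. dist x y < infdist x C + 1 / Suc n" for n
    by (rule infdist_lessE[OF assms(3), of x]) auto
  then obtain y where y: "\<And>n. y n \<in> C" "\<And>n. dist x (y n) < infdist x C + 1 / Suc n"
    by metis
  have "(\<lambda>n. infdist x C + 1 / Suc n) \<longlonglongrightarrow> infdist x C + 0"
    by (rule tendsto_add[OF tendsto_const LIMSEQ_Suc[OF lim_inverse_n']])
  then have upper: "(\<lambda>n. infdist x C + 1 / Suc n) \<longlonglongrightarrow> infdist x C"
    by simp
  have lim: "(\<lambda>n. dist x (y n)) \<longlonglongrightarrow> infdist x C"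
  proof (rule tendsto_sandwich[OF _ _ tendsto_const upper])
    show "\<forall>\<^sub>F n in sequentially. infdist x C \<le> dist x (y n)"
      using y(1) by (simp add: infdist_le)
    show "\<forall>\<^sub>F n in sequentially. dist x (y n) \<le> infdist x C + 1 / Suc n"
      using y(2) by (simp add: less_imp_le)
  qed
  obtain L where L: "y \<longlonglongrightarrow> L"
    using minimizing_sequence_Cauchy[OF assms(2) y(1) lim] Cauchy_convergent_iff convergent_def by blast
  have "L \<in> C" using closed_sequentially[OF assms(1) y(1) L] .
  moreover have "dist x L = infdist x C"
    using LIMSEQ_unique[OF tendsto_dist[OF tendsto_const L] lim] .
  then have "\<forall>z\<in>C. dist x L \<le> dist x z"
    by (simp add: infdist_le)
  ultimately show ?thesis by blast
qed

lemma metric_proj_nearest: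
  fixes C :: "'a::{real_inner,complete_space} set"
  assumes "closed C" "convex C" "C \<noteq> {}"
  shows "metric_proj C x \<in> C \<and> (\<forall>z\<in>C. dist x (metric_proj C x) \<le> dist x z)"
proof -
  have "\<exists>!y. y \<in> C \<and> (\<forall>z\<in>C. dist x y \<le> dist x z)"
    using closed_convex_nearest_point_exists[OF assms] any_closest_point_unique[OF assms(2,1)] by blast
  then show ?thesis unfolding metric_proj_def by (rule theI')
qed

context
  fixes C :: "'a::{real_inner,complete_space} set"
  assumes closed_C: "closed C" and convex_C: "convex C"
begin

lemma metric_proj_eqI:
  assumes "y \<in> C" "\<And>z. z \<in> C \<Longrightarrow> dist x y \<le> dist x z"
  shows "metric_proj C x = y"
  using metric_proj_nearest[OF closed_C convex_C] assms any_closest_point_unique[OF convex_C closed_C]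
  by blast

lemma metric_proj_in: "C \<noteq> {} \<Longrightarrow> metric_proj C x \<in> C"
  using metric_proj_nearest[OF closed_C convex_C] by blast

lemma metric_proj_le: "z \<in> C \<Longrightarrow> dist x (metric_proj C x) \<le> dist x z"
  using metric_proj_nearest[OF closed_C convex_C] by blast

lemma infdist_eq_dist_metric_proj: "C \<noteq> {} \<Longrightarrow> infdist x C = dist x (metric_proj C x)"
  using infdist_le[OF metric_proj_in] infdist_geI[of C "dist x (metric_proj C x)" x] metric_proj_le
  by (meson antisym)

lemma metric_proj_inner_le: "z \<in> C \<Longrightarrow> inner (x - metric_proj C x) (z - metric_proj C x) \<le> 0"
  using any_closest_point_dot[OF convex_C closed_C] metric_proj_in metric_proj_le by blast

lemma metric_proj_pythagoras:
  assumes "z \<in> C"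
  shows "(dist x (metric_proj C x))\<^sup>2 + (dist (metric_proj C x) z)\<^sup>2 \<le> (dist x z)\<^sup>2"
proof -
  define p where "p = metric_proj C x"
  have "(dist x z)\<^sup>2 = (dist x p)\<^sup>2 + (dist p z)\<^sup>2 - 2 * inner (x - p) (z - p)"
    by (simp add: dist_norm power2_norm_eq_inner inner_diff_left inner_diff_right inner_commute)
  then show ?thesis
    using metric_proj_inner_le[OF assms] unfolding p_def by simp
qed

lemma metric_proj_firmly_nonexpansive:
  assumes "C \<noteq> {}"
  shows "(dist (metric_proj C x) (metric_proj C y))\<^sup>2
           + (norm ((x - metric_proj C x) - (y - metric_proj C y)))\<^sup>2 \<le> (dist x y)\<^sup>2"
proof -
  define p q where "p = metric_proj C x" and "q = metric_proj C y"
  have "inner (x - p) (q - p) + inner (y - q) (p - q) \<le> 0"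
    using metric_proj_inner_le metric_proj_in[OF assms] unfolding p_def q_def by (simp add: add_nonpos_nonpos)
  moreover have "(dist x y)\<^sup>2 = (dist p q)\<^sup>2 + (norm ((x - p) - (y - q)))\<^sup>2
      - 2 * (inner (x - p) (q - p) + inner (y - q) (p - q))"
    by (simp add: dist_norm power2_norm_eq_inner inner_diff_left inner_diff_right inner_commute algebra_simps)
  ultimately show ?thesis unfolding p_def q_def by simp
qed

lemma metric_proj_nonexpansive:
  assumes "C \<noteq> {}"
  shows "dist (metric_proj C x) (metric_proj C y) \<le> dist x y"
proof (rule power2_le_imp_le)
  show "(dist (metric_proj C x) (metric_proj C y))\<^sup>2 \<le> (dist x y)\<^sup>2"
    using metric_proj_firmly_nonexpansive[OF assms, of x y]
      zero_le_power2[of "norm ((x - metric_proj C x) - (y - metric_proj C y))"] by linarith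
qed simp

end

lemma dist_alternating_projections_le:
  fixes A' B' :: "'a::{real_inner,complete_space} set"
  assumes "closed A'" "convex A'" "A' \<noteq> {}" "closed B'" "convex B'" "B' \<noteq> {}"
  shows "dist (metric_proj A' (metric_proj B' x)) p
    \<le> dist (metric_proj B' x) (metric_proj B' p) + dist (metric_proj B' p) (p + u) + dist (metric_proj A' (p + u)) p"
proof -
  have "dist (metric_proj A' (metric_proj B' x)) (metric_proj A' (p + u)) \<le> dist (metric_proj B' x) (p + u)"
    by (rule metric_proj_nonexpansive[OF assms(1-3)])
  then show ?thesis
    using dist_triangle[of "metric_proj A' (metric_proj B' x)" p "metric_proj A' (p + u)"]
      dist_triangle[of "metric_proj B' x" "p + u" "metric_proj B' p"] by linarith
qed

lemma metric_proj_contracts_far_from_shift: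
  fixes B' :: "'a::{real_inner,complete_space} set"
  assumes "closed B'" "convex B'" "B' \<noteq> {}" "0 < c" "0 < dist x p"
    and far: "c * dist x p \<le> dist (x + u) (metric_proj B' x)"
    and near: "dist (p + u) (metric_proj B' p) \<le> c * dist x p / 2"
  shows "dist (metric_proj B' x) (metric_proj B' p) \<le> dist x p - c\<^sup>2 * dist x p / 8"
proof -
  define X where "X = metric_proj B' x" 
  define P where "P = metric_proj B' p"
  have "c * dist x p / 2 \<le> norm ((x + u - X) - (p + u - P))"
    using norm_triangle_ineq2[of "x + u - X" "p + u - P"] far near
    unfolding X_def P_def dist_norm by linarith
  also have "(x + u - X) - (p + u - P) = (x - X) - (p - P)" by (simp add: algebra_simps)
  finally have "c * dist x p / 2 \<le> norm ((x - X) - (p - P))" .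
  then have "dist X P \<le> dist x p - (c * dist x p / 2)\<^sup>2 / (2 * dist x p)"
    using metric_proj_firmly_nonexpansive[OF assms(1-3), of x p] assms(4,5)
    unfolding X_def P_def by (intro leg_le_hypotenuse_minus) auto
  also have "(c * dist x p / 2)\<^sup>2 / (2 * dist x p) = c\<^sup>2 * dist x p / 8"
    using assms(5) by (simp add: power2_eq_square)
  finally show ?thesis unfolding X_def P_def .
qed

lemma alternating_step_dist_le_max:
  fixes A' B' :: "'a::{real_inner,complete_space} set"
  assumes "closed A'" "convex A'" "A' \<noteq> {}" "closed B'" "convex B'" "B' \<noteq> {}" "0 < c" "0 < R"
    and near: "dist (metric_proj A' (p + u)) p \<le> \<eta>" "dist (metric_proj B' p) (p + u) \<le> \<eta>"
    and small: "\<eta> \<le> 1" "\<eta> \<le> c * R / 2" "\<eta> \<le> c\<^sup>2 * R / 16"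
    and growth: "R \<le> dist x p \<Longrightarrow> c * dist x p \<le> dist (x + u) (metric_proj B' x)"
  shows "dist (metric_proj A' (metric_proj B' x)) p \<le> max (dist x p) (R + 2)"
proof -
  define r where "r = dist x p"
  have base: "dist (metric_proj A' (metric_proj B' x)) p \<le> dist (metric_proj B' x) (metric_proj B' p) + 2 * \<eta>"
    using dist_alternating_projections_le[OF assms(1-6), of x p u] near by linarith
  show ?thesis
  proof (cases "R \<le> r")
    case True
    have "c * R \<le> c * r" using True \<open>0 < c\<close> by simp
    then have "dist (p + u) (metric_proj B' p) \<le> c * r / 2"
      using near(2) small(2) by (simp add: dist_commute)
    then have "dist (metric_proj B' x) (metric_proj B' p) \<le> r - c\<^sup>2 * r / 8"
      using metric_proj_contracts_far_from_shift[OF assms(4-7), of x p u] growth True \<open>0 < R\<close>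
      unfolding r_def by force
    moreover have "c\<^sup>2 * R \<le> c\<^sup>2 * r" using True by (simp add: mult_left_mono)
    ultimately show ?thesis using base small(3) unfolding r_def by simp
  next
    case False
    have "dist (metric_proj B' x) (metric_proj B' p) \<le> r"
      unfolding r_def by (rule metric_proj_nonexpansive[OF assms(4-6)])
    then show ?thesis using base False small(1) unfolding r_def by simp
  qed
qed

section \<open>Attouch-Wets convergence and projections\<close>

lemma infdist_le_aw_excess:
  fixes C D :: "'a::real_normed_vector set"
  assumes "x \<in> C" "norm x \<le> real N"
  shows "infdist x D \<le> aw_excess N C D"
proof -
  have x: "x \<in> C \<inter> cball 0 (real N)" using assms by simp
  have "bdd_above ((\<lambda>c. infdist c D) ` (C \<inter> cball 0 (real N)))"
  proof (rule bdd_aboveI2)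
    fix c assume "c \<in> C \<inter> cball 0 (real N)"
    then show "infdist c D \<le> infdist 0 D + real N"
      using infdist_triangle[of c D 0] by (simp add: dist_norm)
  qed
  then show ?thesis
    using x cSUP_upper[OF x] by (auto simp: aw_excess_def)
qed

lemma aw_convergesD:
  fixes C :: "'a::real_normed_vector set"
  assumes "aw_converges Cs C" "\<epsilon> > 0"
  shows "eventually (\<lambda>n. (\<forall>x\<in>Cs n. norm x \<le> R \<longrightarrow> infdist x C \<le> \<epsilon>)
                         \<and> (\<forall>x\<in>C. norm x \<le> R \<longrightarrow> infdist x (Cs n) \<le> \<epsilon>)) sequentially"
proof -
  define N where "N = max 1 (nat \<lceil>R\<rceil>)"
  have "R \<le> real N" unfolding N_def by linarith
  have "(\<lambda>n. aw_h N (Cs n) C) \<longlonglongrightarrow> 0"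
    using assms(1) unfolding aw_converges_def N_def by simp
  then have "eventually (\<lambda>n. aw_h N (Cs n) C < \<epsilon>) sequentially"
    using assms(2) by (rule order_tendstoD(2))
  then show ?thesis
  proof (rule eventually_mono)
    fix n assume "aw_h N (Cs n) C < \<epsilon>"
    then show "(\<forall>x\<in>Cs n. norm x \<le> R \<longrightarrow> infdist x C \<le> \<epsilon>)
                \<and> (\<forall>x\<in>C. norm x \<le> R \<longrightarrow> infdist x (Cs n) \<le> \<epsilon>)"
      using infdist_le_aw_excess[of _ _ N] \<open>R \<le> real N\<close> unfolding aw_h_def
      by (smt (verit) max.bounded_iff)
  qed
qed

lemma dist_metric_projs_le:
  fixes C C' :: "'a::{real_inner,complete_space} set"
  assumes "closed C" "convex C" "C \<noteq> {}" "closed C'" "convex C'" "C' \<noteq> {}"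
    and "infdist (metric_proj C y) C' < \<eta>" "infdist (metric_proj C' y) C < \<eta>"
  shows "dist (metric_proj C' y) (metric_proj C y) \<le> \<eta> + sqrt (4 * \<eta> * (dist y (metric_proj C y) + \<eta>))"
proof -
  define p p' where "p = metric_proj C y" and "p' = metric_proj C' y"
  obtain q where "q \<in> C'" "dist p q < \<eta>" using infdist_lessE[OF assms(6,7)] unfolding p_def .
  obtain q' where "q' \<in> C" "dist p' q' < \<eta>" using infdist_lessE[OF assms(3,8)] unfolding p'_def .
  have "dist y p' \<le> dist y q"
    unfolding p'_def using metric_proj_le[OF assms(4,5) \<open>q \<in> C'\<close>] .
  then have "dist y q' \<le> dist y p + 2 * \<eta>"
    using dist_triangle[of y q' p'] dist_triangle[of y q p] \<open>dist p q < \<eta>\<close> \<open>dist p' q' < \<eta>\<close> by linarith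
  then have "(dist y q')\<^sup>2 \<le> (dist y p + 2 * \<eta>)\<^sup>2"
    by (rule power_mono) simp
  moreover have "(dist y p)\<^sup>2 + (dist p q')\<^sup>2 \<le> (dist y q')\<^sup>2"
    unfolding p_def by (rule metric_proj_pythagoras[OF assms(1,2) \<open>q' \<in> C\<close>])
  ultimately have "(dist p q')\<^sup>2 \<le> 4 * \<eta> * (dist y p + \<eta>)"
    by (simp add: power2_eq_square algebra_simps)
  then show ?thesis
    using real_le_rsqrt dist_triangle[of p' p q'] \<open>dist p' q' < \<eta>\<close> unfolding p_def[symmetric] p'_def[symmetric]
    by (smt (verit) dist_commute)
qed

lemma metric_proj_aw_uniform:
  fixes C :: "'a::{real_inner,complete_space} set"
  assumes C: "closed C" "convex C" "C \<noteq> {}"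
    and Cs: "eventually (\<lambda>n. closed (Cs n) \<and> convex (Cs n) \<and> Cs n \<noteq> {}) sequentially"
    and "aw_converges Cs C" "\<epsilon> > 0"
  shows "eventually (\<lambda>n. \<forall>y. norm y \<le> R \<longrightarrow> dist (metric_proj (Cs n) y) (metric_proj C y) \<le> \<epsilon>) sequentially"
proof -
  obtain c0 where "c0 \<in> C" using C(3) by blast
  define K where "K = \<bar>R\<bar> + norm c0"
  define \<eta> where "\<eta> = min 1 (min (\<epsilon> / 2) (\<epsilon>\<^sup>2 / (16 * (K + 1))))"
  have "K \<ge> 0" unfolding K_def by simp
  have "0 < \<eta>" using \<open>K \<ge> 0\<close> \<open>\<epsilon> > 0\<close> by (simp add: \<eta>_def)
  have "\<eta> \<le> 1" "\<eta> \<le> \<epsilon> / 2" "\<eta> \<le> \<epsilon>\<^sup>2 / (16 * (K + 1))" unfolding \<eta>_def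
    by (rule min.cobounded1, intro min.coboundedI2 min.cobounded1, intro min.coboundedI2 min.cobounded2)
  then have "\<eta> * (16 * (K + 1)) \<le> \<epsilon>\<^sup>2"
    using \<open>K \<ge> 0\<close> by (simp add: pos_le_divide_eq)
  then have \<eta>_small: "4 * \<eta> * (K + 1) \<le> (\<epsilon> / 2)\<^sup>2"
    by (simp add: power_divide algebra_simps)
  have "eventually (\<lambda>n. (\<forall>x\<in>Cs n. norm x \<le> \<bar>R\<bar> + K + 1 \<longrightarrow> infdist x C \<le> \<eta> / 2)
      \<and> (\<forall>x\<in>C. norm x \<le> \<bar>R\<bar> + K + 1 \<longrightarrow> infdist x (Cs n) \<le> \<eta> / 2)) sequentially"
    using \<open>0 < \<eta>\<close> by (intro aw_convergesD[OF assms(5)]) simp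
  with Cs show ?thesis
  proof eventually_elim
    case (elim n)
    then have Cn: "closed (Cs n)" "convex (Cs n)" "Cs n \<noteq> {}" by blast+
    show ?case
    proof (intro allI impI)
      fix y :: 'a assume "norm y \<le> R"
      define p p' where "p = metric_proj C y" and "p' = metric_proj (Cs n) y"
      have "dist y p \<le> dist y c0" unfolding p_def by (rule metric_proj_le[OF C(1,2) \<open>c0 \<in> C\<close>])
      then have "dist y p \<le> K"
        using norm_triangle_ineq4[of y c0] \<open>norm y \<le> R\<close> abs_ge_self[of R]
        unfolding K_def dist_norm by linarith
      then have "infdist p (Cs n) \<le> \<eta> / 2"
        using elim metric_proj_in[OF C, of y] norm_triangle_sub[of p y] \<open>norm y \<le> R\<close> abs_ge_self[of R]
        unfolding p_def dist_norm norm_minus_commute[of y] by fastforce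
      moreover have "dist y p' \<le> infdist p (Cs n) + dist y p"
        unfolding p'_def infdist_eq_dist_metric_proj[OF Cn, symmetric] by (rule infdist_triangle)
      ultimately have "infdist p' C \<le> \<eta> / 2"
        using elim metric_proj_in[OF Cn, of y] norm_triangle_sub[of p' y] \<open>norm y \<le> R\<close> abs_ge_self[of R]
          \<open>dist y p \<le> K\<close> \<open>\<eta> \<le> 1\<close> unfolding p'_def dist_norm norm_minus_commute[of y] by fastforce
      have "4 * \<eta> * (dist y p + \<eta>) \<le> 4 * \<eta> * (K + 1)"
        by (rule mult_left_mono) (use \<open>dist y p \<le> K\<close> \<open>\<eta> \<le> 1\<close> \<open>0 < \<eta>\<close> in linarith)+
      then have "sqrt (4 * \<eta> * (dist y p + \<eta>)) \<le> \<epsilon> / 2"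
        using \<eta>_small \<open>\<epsilon> > 0\<close> by (intro real_le_lsqrt) auto
      then show "dist p' p \<le> \<epsilon>"
        using dist_metric_projs_le[OF C Cn, of y \<eta>] \<open>infdist p (Cs n) \<le> \<eta> / 2\<close> \<open>infdist p' C \<le> \<eta> / 2\<close>
          \<open>0 < \<eta>\<close> \<open>\<eta> \<le> \<epsilon> / 2\<close> unfolding p_def p'_def by linarith
    qed
  qed
qed

lemma metric_proj_aw_tendsto:
  fixes C :: "'a::{real_inner,complete_space} set"
  assumes "closed C" "convex C" "C \<noteq> {}"
    and "eventually (\<lambda>n. closed (Cs n) \<and> convex (Cs n) \<and> Cs n \<noteq> {}) sequentially"
    and "aw_converges Cs C"
  shows "(\<lambda>n. metric_proj (Cs n) y) \<longlonglongrightarrow> metric_proj C y"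
proof (rule tendstoI)
  fix \<epsilon> :: real assume "\<epsilon> > 0"
  then have "eventually (\<lambda>n. dist (metric_proj (Cs n) y) (metric_proj C y) \<le> \<epsilon> / 2) sequentially"
    using metric_proj_aw_uniform[OF assms, of "\<epsilon> / 2" "norm y"] by (auto elim: eventually_mono)
  then show "eventually (\<lambda>n. dist (metric_proj (Cs n) y) (metric_proj C y) < \<epsilon>) sequentially"
    using \<open>\<epsilon> > 0\<close> by (auto elim: eventually_mono)
qed

section \<open>The gap vector\<close>

lemma regular_coupleD:
  assumes "regular_couple A B" "\<epsilon> > 0"
  obtains \<delta> where "\<delta> > 0"
    "\<And>x. infdist x A \<le> \<delta> \<Longrightarrow> infdist (x + gap_vector A B) B \<le> \<delta> \<Longrightarrow> infdist x (near_A A B) \<le> \<epsilon>"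
  using assms unfolding regular_couple_def by (auto simp: infdist_translate)

locale convex_couple =
  fixes A B :: "'a::{real_inner,complete_space} set"
  assumes closed_A: "closed A" and convex_A: "convex A" and nonempty_A: "A \<noteq> {}"
    and closed_B: "closed B" and convex_B: "convex B" and nonempty_B: "B \<noteq> {}"
    and near_A_nonempty: "near_A A B \<noteq> {}"
begin

abbreviation "v \<equiv> gap_vector A B"
abbreviation "E \<equiv> near_A A B"
abbreviation "F \<equiv> near_B A B"

lemma set_dist_le_infdist: "a \<in> A \<Longrightarrow> set_dist A B \<le> infdist a B"
  unfolding set_dist_def by (rule cINF_lower) (auto intro: bdd_belowI[of _ 0] infdist_nonneg)

lemma set_dist_le_dist: "a \<in> A \<Longrightarrow> b \<in> B \<Longrightarrow> set_dist A B \<le> dist a b"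
  using set_dist_le_infdist infdist_le order_trans by blast

lemma metric_proj_B_near_A: 
  assumes "e \<in> E"
  shows "metric_proj B e = e + v"
proof -
  define f where "f = metric_proj B e"
  define S where "S = closure (set_diff_minkowski B A)"
  have "e \<in> A" "f \<in> B" "dist e f = set_dist A B"
    using assms metric_proj_in[OF closed_B convex_B nonempty_B]
      infdist_eq_dist_metric_proj[OF closed_B convex_B nonempty_B]
    by (auto simp: near_A_def f_def)
  then have "f - e \<in> S"
    unfolding S_def set_diff_minkowski_def by (intro closure_subset[THEN subsetD]) blast
  have "set_diff_minkowski B A \<subseteq> {w. set_dist A B \<le> norm w}"
    unfolding set_diff_minkowski_def using set_dist_le_dist by (auto simp: dist_norm norm_minus_commute)
  then have "S \<subseteq> {w. set_dist A B \<le> norm w}"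
    unfolding S_def by (intro closure_minimal closed_Collect_le continuous_intros)
  moreover have "convex S"
  proof -
    have "set_diff_minkowski B A = (\<Union>b\<in>B. \<Union>a\<in>A. {b - a})"
      by (auto simp: set_diff_minkowski_def)
    then show ?thesis
      unfolding S_def by (simp add: convex_closure convex_differences convex_A convex_B)
  qed
  txt \<open>f - e attains the least norm dist(A,B) on the closure of B - A.\<close>
  ultimately have "metric_proj S 0 = f - e"
    using \<open>f - e \<in> S\<close> \<open>dist e f = set_dist A B\<close>
    by (intro metric_proj_eqI) (auto simp: S_def dist_norm norm_minus_commute)
  then show ?thesis unfolding gap_vector_def S_def f_def by (simp add: algebra_simps)
qed

lemma norm_gap_vector: "norm v = set_dist A B"
proof -
  obtain e where "e \<in> E" using near_A_nonempty by blast
  then show ?thesis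
    using metric_proj_B_near_A infdist_eq_dist_metric_proj[OF closed_B convex_B nonempty_B, of e]
    by (auto simp: near_A_def dist_norm)
qed

lemma near_A_shift_in_B: "e \<in> E \<Longrightarrow> e + v \<in> B"
  using metric_proj_B_near_A metric_proj_in[OF closed_B convex_B nonempty_B] by metis

lemma metric_proj_A_shift_near_A:
  assumes "e \<in> E"
  shows "metric_proj A (e + v) = e"
proof (rule metric_proj_eqI[OF closed_A convex_A])
  show "e \<in> A" using assms by (simp add: near_A_def)
  show "dist (e + v) e \<le> dist (e + v) z" if "z \<in> A" for z
    using set_dist_le_dist[OF that near_A_shift_in_B[OF assms]] norm_gap_vector
    by (simp add: dist_norm norm_minus_commute)
qed

lemma shift_near_A_in_near_B:
  assumes "e \<in> E"
  shows "e + v \<in> F"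
proof -
  have "e \<in> A" using assms by (simp add: near_A_def)
  then have "infdist (e + v) A \<le> set_dist A B"
    using infdist_le[of e A "e + v"] norm_gap_vector by (simp add: dist_norm)
  moreover have "set_dist A B \<le> infdist (e + v) A"
    using set_dist_le_dist near_A_shift_in_B[OF assms] nonempty_A
    by (intro infdist_geI) (auto simp: dist_commute)
  ultimately show ?thesis
    using near_A_shift_in_B[OF assms] by (simp add: near_B_def)
qed

lemma metric_proj_B_shift_pythagoras:
  assumes "e \<in> E"
  shows "(dist (metric_proj B x) (e + v))\<^sup>2 + (dist (x + v) (metric_proj B x))\<^sup>2 \<le> (dist x e)\<^sup>2"
  using metric_proj_firmly_nonexpansive[OF closed_B convex_B nonempty_B, of x e]
    metric_proj_B_near_A[OF assms] by (simp add: dist_norm algebra_simps)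

lemma dist_metric_proj_B_shift_le: "e \<in> E \<Longrightarrow> dist (metric_proj B x) (e + v) \<le> dist x e"
  using metric_proj_nonexpansive[OF closed_B convex_B nonempty_B, of x e] metric_proj_B_near_A
  by simp

lemma dist_alternating_le:
  "e \<in> E \<Longrightarrow> dist (metric_proj A (metric_proj B x)) e \<le> dist (metric_proj B x) (e + v)"
  using metric_proj_nonexpansive[OF closed_A convex_A nonempty_A, of "metric_proj B x" "e + v"]
    metric_proj_A_shift_near_A by simp

lemma infdist_metric_proj_B_near_B_le: "infdist (metric_proj B x) F \<le> infdist x E"
proof (rule infdist_geI[OF near_A_nonempty])
  fix e assume "e \<in> E"
  show "infdist (metric_proj B x) F \<le> dist x e"
    using infdist_le[OF shift_near_A_in_near_B[OF \<open>e \<in> E\<close>]] dist_metric_proj_B_shift_le[OF \<open>e \<in> E\<close>]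
    by (rule order_trans)
qed

lemma infdist_alternating_le: "infdist (metric_proj A (metric_proj B x)) E \<le> infdist x E"
proof (rule infdist_geI[OF near_A_nonempty])
  fix e assume "e \<in> E"
  show "infdist (metric_proj A (metric_proj B x)) E \<le> dist x e"
    using infdist_le[OF \<open>e \<in> E\<close>] dist_alternating_le[OF \<open>e \<in> E\<close>]
      dist_metric_proj_B_shift_le[OF \<open>e \<in> E\<close>] by (meson order_trans)
qed

lemma infdist_alternating_decrease:
  assumes "0 < \<delta>" "\<delta> \<le> infdist (x + v) B" "\<And>e. e \<in> E \<Longrightarrow> dist x e \<le> L"
  shows "infdist (metric_proj A (metric_proj B x)) E \<le> infdist x E - \<delta>\<^sup>2 / (2 * L)"
proof -
  have "infdist (metric_proj A (metric_proj B x)) E + \<delta>\<^sup>2 / (2 * L) \<le> infdist x E"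
  proof (rule infdist_geI[OF near_A_nonempty])
    fix e assume "e \<in> E"
    have "\<delta> \<le> dist (x + v) (metric_proj B x)"
      using assms(2) infdist_le[OF metric_proj_in[OF closed_B convex_B nonempty_B]] by (rule order_trans)
    then have "dist (metric_proj B x) (e + v) \<le> dist x e - \<delta>\<^sup>2 / (2 * L)"
      using leg_le_hypotenuse_minus[OF metric_proj_B_shift_pythagoras[OF \<open>e \<in> E\<close>] assms(1)]
        assms(3)[OF \<open>e \<in> E\<close>] by simp
    then show "infdist (metric_proj A (metric_proj B x)) E + \<delta>\<^sup>2 / (2 * L) \<le> dist x e"
      using infdist_le[OF \<open>e \<in> E\<close>, of "metric_proj A (metric_proj B x)"]
        dist_alternating_le[OF \<open>e \<in> E\<close>, of x] by linarith
  qed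
  then show ?thesis by linarith
qed

end

locale regular_convex_couple = convex_couple +
  assumes regular: "regular_couple A B" and bounded_near_A: "bounded E"
begin

lemma approximate_solutions_bounded:
  obtains \<delta> \<rho> where "\<delta> > 0"
    "\<And>x. infdist x A \<le> \<delta> \<Longrightarrow> infdist (x + v) B \<le> \<delta> \<Longrightarrow> norm x \<le> \<rho>"
proof -
  obtain \<delta> where "\<delta> > 0" and \<delta>: "\<And>x. infdist x A \<le> \<delta> \<Longrightarrow> infdist (x + v) B \<le> \<delta> \<Longrightarrow> infdist x E \<le> 1"
    using regular_coupleD[OF regular zero_less_one] by blast
  obtain K where K: "\<And>e. e \<in> E \<Longrightarrow> norm e \<le> K"
    using bounded_near_A by (auto simp: bounded_iff)
  have "norm x \<le> K + 2" if approx: "infdist x A \<le> \<delta>" "infdist (x + v) B \<le> \<delta>" for x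
  proof -
    obtain e where "e \<in> E" "dist x e < 2"
      using infdist_lessE[OF near_A_nonempty, of x 2] \<delta>[OF approx] by force
    then show ?thesis using K[of e] norm_triangle_sub[of x e] by (simp add: dist_norm)
  qed
  then show ?thesis using that \<open>\<delta> > 0\<close> by blast
qed

lemma gap_linear_growth:
  assumes "e0 \<in> E"
  obtains c R \<eta> M where "0 < c" "0 < R" "0 < \<eta>"
    "\<And>A' B' z w x y. convex A' \<Longrightarrow> convex B' \<Longrightarrow> z \<in> A' \<Longrightarrow> w \<in> B' \<Longrightarrow> x \<in> A' \<Longrightarrow> y \<in> B'
      \<Longrightarrow> dist z e0 \<le> \<eta> \<Longrightarrow> dist w (e0 + v) \<le> \<eta>
      \<Longrightarrow> (\<forall>x\<in>A'. norm x \<le> M \<longrightarrow> infdist x A \<le> \<eta>) \<Longrightarrow> (\<forall>y\<in>B'. norm y \<le> M \<longrightarrow> infdist y B \<le> \<eta>)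
      \<Longrightarrow> R \<le> dist x e0 \<Longrightarrow> c * dist x e0 \<le> dist (x + v) y"
proof -
  obtain \<delta> \<rho> where "\<delta> > 0" and \<rho>: "\<And>x. infdist x A \<le> \<delta> \<Longrightarrow> infdist (x + v) B \<le> \<delta> \<Longrightarrow> norm x \<le> \<rho>"
    using approximate_solutions_bounded by blast
  define R where "R = \<bar>\<rho>\<bar> + norm e0 + 1"
  define \<eta> where "\<eta> = min (1/2) (\<delta> / 6)"
  define c where "c = \<delta> / (2 * R)"
  define M where "M = norm e0 + norm v + R + 2 + \<delta>"
  have "0 < R" unfolding R_def using abs_ge_zero[of \<rho>] norm_ge_zero[of e0] by linarith
  then have "0 < c" "c * R = \<delta> / 2" using \<open>\<delta> > 0\<close> by (simp_all add: c_def)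
  have "0 < \<eta>" "\<eta> \<le> 1/2" "\<eta> \<le> \<delta> / 6" using \<open>\<delta> > 0\<close> by (simp_all add: \<eta>_def)
  have "c * dist x e0 \<le> dist (x + v) y"
    if mem: "convex A'" "convex B'" "z \<in> A'" "w \<in> B'" "x \<in> A'" "y \<in> B'"
      and near: "dist z e0 \<le> \<eta>" "dist w (e0 + v) \<le> \<eta>"
      and A': "\<forall>x\<in>A'. norm x \<le> M \<longrightarrow> infdist x A \<le> \<eta>"
      and B': "\<forall>y\<in>B'. norm y \<le> M \<longrightarrow> infdist y B \<le> \<eta>"
      and far: "R \<le> dist x e0" for A' B' z w x y
  proof (rule ccontr)
    txt \<open>Moving x and y towards z and w gives points of A' and B' at distance about R from e0 with
      gap below \<delta>; regularity puts such a point in the ball of radius \<rho>, which R exceeds.\<close>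
    assume "\<not> c * dist x e0 \<le> dist (x + v) y"
    then have small: "dist (x + v) y \<le> c * dist x e0" by simp
    have "0 < dist x e0" using \<open>0 < R\<close> far by linarith
    obtain x' y' where "x' \<in> A'" "y' \<in> B'" and radius: "\<bar>dist x' e0 - R\<bar> \<le> dist z e0"
      and gap0: "dist (x' + v) y' \<le> dist (z + v) w + R / dist x e0 * dist (x + v) y"
      using convex_pairs_at_radius[OF mem \<open>0 < R\<close> far, where u = v] by blast
    have "\<bar>dist x' e0 - R\<bar> \<le> \<eta>" using radius near(1) by linarith
    have "dist (z + v) w \<le> 2 * \<eta>"
      using dist_triangle[of "z + v" w "e0 + v"] near by (simp add: dist_commute dist_add_cancel2)
    moreover have "R / dist x e0 * dist (x + v) y \<le> R / dist x e0 * (c * dist x e0)"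
      by (rule mult_left_mono[OF small]) (use \<open>0 < R\<close> \<open>0 < dist x e0\<close> in simp)
    ultimately have gap: "dist (x' + v) y' \<le> 2 * \<eta> + \<delta> / 2"
      using gap0 \<open>0 < dist x e0\<close> \<open>c * R = \<delta> / 2\<close> by (simp add: algebra_simps)
    have "norm x' \<le> norm e0 + R + \<eta>"
      using \<open>\<bar>dist x' e0 - R\<bar> \<le> \<eta>\<close> norm_triangle_sub[of x' e0] by (simp add: dist_norm)
    moreover have "norm (y' - (x' + v)) \<le> 2 * \<eta> + \<delta> / 2"
      using gap by (simp add: dist_norm norm_minus_commute)
    ultimately have "norm x' \<le> M" "norm y' \<le> M"
      using norm_triangle_sub[of y' "x' + v"] norm_triangle_ineq[of x' v] norm_ge_zero[of v]
        \<open>\<eta> \<le> 1/2\<close> \<open>\<delta> > 0\<close> unfolding M_def by linarith+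
    then have "infdist x' A \<le> \<eta>" "infdist y' B \<le> \<eta>"
      using A' B' \<open>x' \<in> A'\<close> \<open>y' \<in> B'\<close> by blast+
    then have "infdist x' A \<le> \<delta>" "infdist (x' + v) B \<le> \<delta>"
      using infdist_triangle[of "x' + v" B y'] gap \<open>\<eta> \<le> \<delta> / 6\<close> \<open>\<delta> > 0\<close> by linarith+
    then have "norm x' \<le> \<bar>\<rho>\<bar>" using \<rho> abs_ge_self[of \<rho>] by fastforce
    moreover have "R - \<eta> - norm e0 \<le> norm x'"
      using \<open>\<bar>dist x' e0 - R\<bar> \<le> \<eta>\<close> norm_triangle_ineq4[of x' e0] by (simp add: dist_norm)
    ultimately show False using \<open>\<eta> \<le> 1/2\<close> by (simp add: R_def)
  qed
  then show ?thesis using that \<open>0 < c\<close> \<open>0 < R\<close> \<open>0 < \<eta>\<close> by blast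
qed

end

section \<open>Perturbed alternating projections\<close>

locale perturbed_alternating_projections = regular_convex_couple +
  fixes As Bs :: "nat \<Rightarrow> 'a set" and a b :: "nat \<Rightarrow> 'a"
  assumes perturbed_sets: "\<And>n. n \<ge> 1 \<Longrightarrow> closed (As n) \<and> convex (As n) \<and> As n \<noteq> {}
      \<and> closed (Bs n) \<and> convex (Bs n) \<and> Bs n \<noteq> {}"
    and aw_A: "aw_converges As A" and aw_B: "aw_converges Bs B"
    and b_step: "\<And>n. n \<ge> 1 \<Longrightarrow> b n = metric_proj (Bs n) (a (n - 1))"
    and a_step: "\<And>n. n \<ge> 1 \<Longrightarrow> a n = metric_proj (As n) (b n)"
begin

lemma As_Suc: "closed (As (Suc n))" "convex (As (Suc n))" "As (Suc n) \<noteq> {}"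
  using perturbed_sets[of "Suc n"] by auto

lemma Bs_Suc: "closed (Bs (Suc n))" "convex (Bs (Suc n))" "Bs (Suc n) \<noteq> {}"
  using perturbed_sets[of "Suc n"] by auto

lemma eventually_As: "eventually (\<lambda>n. closed (As n) \<and> convex (As n) \<and> As n \<noteq> {}) sequentially"
  using eventually_ge_at_top[of 1] by (rule eventually_mono) (use perturbed_sets in blast)

lemma eventually_Bs: "eventually (\<lambda>n. closed (Bs n) \<and> convex (Bs n) \<and> Bs n \<noteq> {}) sequentially"
  using eventually_ge_at_top[of 1] by (rule eventually_mono) (use perturbed_sets in blast)

lemma b_Suc: "b (Suc n) = metric_proj (Bs (Suc n)) (a n)"
  using b_step[of "Suc n"] by simp

lemma a_Suc: "a (Suc n) = metric_proj (As (Suc n)) (b (Suc n))"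
  using a_step[of "Suc n"] by simp

lemma a_in: "n \<ge> 1 \<Longrightarrow> a n \<in> As n"
  using a_step metric_proj_in perturbed_sets by metis

lemma metric_proj_As_tendsto: "e \<in> E \<Longrightarrow> (\<lambda>n. metric_proj (As n) (e + v)) \<longlonglongrightarrow> e"
  using metric_proj_aw_tendsto[OF closed_A convex_A nonempty_A eventually_As aw_A, of "e + v"]
  by (simp add: metric_proj_A_shift_near_A)

lemma metric_proj_Bs_tendsto: "e \<in> E \<Longrightarrow> (\<lambda>n. metric_proj (Bs n) e) \<longlonglongrightarrow> e + v"
  using metric_proj_aw_tendsto[OF closed_B convex_B nonempty_B eventually_Bs aw_B, of e]
  by (simp add: metric_proj_B_near_A)

lemma eventually_gap_linear_growth:
  assumes "e0 \<in> E"
  obtains c R where "0 < c" "0 < R"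
    "eventually (\<lambda>n. \<forall>x\<in>As n. \<forall>y\<in>Bs (Suc n). R \<le> dist x e0 \<longrightarrow> c * dist x e0 \<le> dist (x + v) y) sequentially"
proof -
  obtain c R \<eta> M where "0 < c" "0 < R" "0 < \<eta>" and growth:
    "\<And>A' B' z w x y. convex A' \<Longrightarrow> convex B' \<Longrightarrow> z \<in> A' \<Longrightarrow> w \<in> B' \<Longrightarrow> x \<in> A' \<Longrightarrow> y \<in> B'
      \<Longrightarrow> dist z e0 \<le> \<eta> \<Longrightarrow> dist w (e0 + v) \<le> \<eta>
      \<Longrightarrow> (\<forall>x\<in>A'. norm x \<le> M \<longrightarrow> infdist x A \<le> \<eta>) \<Longrightarrow> (\<forall>y\<in>B'. norm y \<le> M \<longrightarrow> infdist y B \<le> \<eta>)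
      \<Longrightarrow> R \<le> dist x e0 \<Longrightarrow> c * dist x e0 \<le> dist (x + v) y"
    using gap_linear_growth[OF assms] by blast
  have "eventually (\<lambda>n. dist (metric_proj (As n) (e0 + v)) e0 < \<eta>) sequentially"
    using metric_proj_As_tendsto[OF assms] \<open>0 < \<eta>\<close> by (rule tendstoD)
  moreover have "eventually (\<lambda>n. dist (metric_proj (Bs (Suc n)) e0) (e0 + v) < \<eta>) sequentially"
    using LIMSEQ_Suc[OF metric_proj_Bs_tendsto[OF assms]] \<open>0 < \<eta>\<close> by (rule tendstoD)
  moreover have "eventually (\<lambda>n. \<forall>x\<in>As n. norm x \<le> M \<longrightarrow> infdist x A \<le> \<eta>) sequentially"
    using aw_convergesD[OF aw_A \<open>0 < \<eta>\<close>, of M] by (simp add: eventually_conj_iff)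
  moreover have "eventually (\<lambda>n. \<forall>y\<in>Bs (Suc n). norm y \<le> M \<longrightarrow> infdist y B \<le> \<eta>) sequentially"
    using aw_convergesD[OF aw_B \<open>0 < \<eta>\<close>, of M]
      eventually_sequentially_Suc[of "\<lambda>n. \<forall>y\<in>Bs n. norm y \<le> M \<longrightarrow> infdist y B \<le> \<eta>"]
    by (simp add: eventually_conj_iff)
  moreover have "eventually (\<lambda>n. n \<ge> 1) sequentially" by simp
  ultimately have "eventually (\<lambda>n. \<forall>x\<in>As n. \<forall>y\<in>Bs (Suc n).
      R \<le> dist x e0 \<longrightarrow> c * dist x e0 \<le> dist (x + v) y) sequentially"
  proof eventually_elim
    case (elim n)
    then have "closed (As n)" "convex (As n)" "As n \<noteq> {}" using perturbed_sets by blast+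
    then show ?case
      using elim growth[of "As n" "Bs (Suc n)" "metric_proj (As n) (e0 + v)" "metric_proj (Bs (Suc n)) e0"]
        metric_proj_in[of "As n"] metric_proj_in[OF Bs_Suc] Bs_Suc(2) by (simp add: less_imp_le)
  qed
  then show ?thesis using that \<open>0 < c\<close> \<open>0 < R\<close> by blast
qed

lemma eventually_dist_a_Suc_le_max:
  assumes "e0 \<in> E"
  obtains C where "eventually (\<lambda>n. dist (a (Suc n)) e0 \<le> max (dist (a n) e0) C) sequentially"
proof -
  obtain c R where "0 < c" "0 < R" and growth:
    "eventually (\<lambda>n. \<forall>x\<in>As n. \<forall>y\<in>Bs (Suc n). R \<le> dist x e0 \<longrightarrow> c * dist x e0 \<le> dist (x + v) y) sequentially"
    using eventually_gap_linear_growth[OF assms] by blast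
  define \<eta> where "\<eta> = min 1 (min (c * R / 2) (c\<^sup>2 * R / 16))"
  have "0 < \<eta>" using \<open>0 < c\<close> \<open>0 < R\<close> by (simp add: \<eta>_def)
  have \<eta>: "\<eta> \<le> 1" "\<eta> \<le> c * R / 2" "\<eta> \<le> c\<^sup>2 * R / 16" unfolding \<eta>_def
    by (rule min.cobounded1, intro min.coboundedI2 min.cobounded1, intro min.coboundedI2 min.cobounded2)
  have "eventually (\<lambda>n. dist (metric_proj (As (Suc n)) (e0 + v)) e0 < \<eta>) sequentially"
    using LIMSEQ_Suc[OF metric_proj_As_tendsto[OF assms]] \<open>0 < \<eta>\<close> by (rule tendstoD)
  moreover have "eventually (\<lambda>n. dist (metric_proj (Bs (Suc n)) e0) (e0 + v) < \<eta>) sequentially"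
    using LIMSEQ_Suc[OF metric_proj_Bs_tendsto[OF assms]] \<open>0 < \<eta>\<close> by (rule tendstoD)
  moreover have "eventually (\<lambda>n. n \<ge> 1) sequentially" by simp
  ultimately have "eventually (\<lambda>n. dist (a (Suc n)) e0 \<le> max (dist (a n) e0) (R + 2)) sequentially"
    using growth
  proof eventually_elim
    case (elim n)
    then have "R \<le> dist (a n) e0 \<Longrightarrow> c * dist (a n) e0 \<le> dist (a n + v) (metric_proj (Bs (Suc n)) (a n))"
      using a_in metric_proj_in[OF Bs_Suc] by blast
    then show ?case
      using alternating_step_dist_le_max[OF As_Suc[of n] Bs_Suc[of n] \<open>0 < c\<close> \<open>0 < R\<close>,
          where x = "a n" and p = e0 and u = v and \<eta> = \<eta>]
        elim(1,2) \<eta> unfolding a_Suc b_Suc by (simp add: dist_commute less_imp_le)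
  qed
  then show ?thesis using that by blast
qed

lemma bounded_range_a: "bounded (range a)"
proof -
  obtain e0 where "e0 \<in> E" using near_A_nonempty by blast
  obtain C where "eventually (\<lambda>n. dist (a (Suc n)) e0 \<le> max (dist (a n) e0) C) sequentially"
    using eventually_dist_a_Suc_le_max[OF \<open>e0 \<in> E\<close>] by blast
  then obtain K where "\<And>n. dist (a n) e0 \<le> K"
    using eventually_le_max_imp_bounded[of "\<lambda>n. dist (a n) e0" C] by blast
  then show ?thesis unfolding bounded_def by (metis dist_commute rangeE)
qed

lemma eventually_norm_b_Suc_le:
  obtains K where "eventually (\<lambda>n. norm (b (Suc n)) \<le> K) sequentially"
proof -
  obtain Ka where Ka: "\<And>n. norm (a n) \<le> Ka" using bounded_range_a by (auto simp: bounded_iff)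
  have "(\<lambda>n. metric_proj (Bs (Suc n)) 0) \<longlonglongrightarrow> metric_proj B 0"
    using LIMSEQ_Suc[OF metric_proj_aw_tendsto[OF closed_B convex_B nonempty_B eventually_Bs aw_B, of 0]] .
  then have "eventually (\<lambda>n. dist (metric_proj (Bs (Suc n)) 0) (metric_proj B 0) < 1) sequentially"
    by (rule tendstoD) simp
  then have "eventually (\<lambda>n. norm (b (Suc n)) \<le> Ka + 1 + norm (metric_proj B 0)) sequentially"
  proof (rule eventually_mono)
    fix n assume "dist (metric_proj (Bs (Suc n)) 0) (metric_proj B 0) < 1"
    moreover have "dist (b (Suc n)) (metric_proj (Bs (Suc n)) 0) \<le> dist (a n) 0"
      unfolding b_Suc by (rule metric_proj_nonexpansive[OF Bs_Suc])
    ultimately show "norm (b (Suc n)) \<le> Ka + 1 + norm (metric_proj B 0)"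
      using Ka[of n] dist_triangle[of "b (Suc n)" 0 "metric_proj (Bs (Suc n)) 0"]
        dist_triangle[of "metric_proj (Bs (Suc n)) 0" 0 "metric_proj B 0"]
      unfolding dist_norm diff_zero by linarith
  qed
  then show ?thesis using that by blast
qed

lemma dist_b_Suc_metric_proj_B_tendsto: "(\<lambda>n. dist (b (Suc n)) (metric_proj B (a n))) \<longlonglongrightarrow> 0"
proof (rule tendsto_zero_if_eventually_le)
  fix \<epsilon> :: real assume "0 < \<epsilon>"
  obtain Ka where Ka: "\<And>n. norm (a n) \<le> Ka" using bounded_range_a by (auto simp: bounded_iff)
  have "eventually (\<lambda>n. \<forall>y. norm y \<le> Ka \<longrightarrow> dist (metric_proj (Bs (Suc n)) y) (metric_proj B y) \<le> \<epsilon>) sequentially"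
    using metric_proj_aw_uniform[OF closed_B convex_B nonempty_B eventually_Bs aw_B \<open>0 < \<epsilon>\<close>, of Ka]
      eventually_sequentially_Suc[of "\<lambda>n. \<forall>y. norm y \<le> Ka \<longrightarrow> dist (metric_proj (Bs n) y) (metric_proj B y) \<le> \<epsilon>"]
    by blast
  then show "eventually (\<lambda>n. dist (b (Suc n)) (metric_proj B (a n)) \<le> \<epsilon>) sequentially"
    by (rule eventually_mono) (simp add: Ka b_Suc)
qed simp

lemma dist_a_Suc_alternating_tendsto:
  "(\<lambda>n. dist (a (Suc n)) (metric_proj A (metric_proj B (a n)))) \<longlonglongrightarrow> 0"
proof (rule tendsto_zero_if_eventually_le)
  fix \<epsilon> :: real assume "0 < \<epsilon>"
  obtain Kb where "eventually (\<lambda>n. norm (b (Suc n)) \<le> Kb) sequentially"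
    using eventually_norm_b_Suc_le by blast
  moreover have "eventually (\<lambda>n. \<forall>y. norm y \<le> Kb \<longrightarrow> dist (metric_proj (As (Suc n)) y) (metric_proj A y) \<le> \<epsilon> / 2) sequentially"
    using metric_proj_aw_uniform[OF closed_A convex_A nonempty_A eventually_As aw_A, of "\<epsilon> / 2" Kb] \<open>0 < \<epsilon>\<close>
      eventually_sequentially_Suc[of "\<lambda>n. \<forall>y. norm y \<le> Kb \<longrightarrow> dist (metric_proj (As n) y) (metric_proj A y) \<le> \<epsilon> / 2"]
    by simp
  moreover have "eventually (\<lambda>n. dist (b (Suc n)) (metric_proj B (a n)) < \<epsilon> / 2) sequentially"
    using dist_b_Suc_metric_proj_B_tendsto \<open>0 < \<epsilon>\<close> by (intro order_tendstoD(2)) auto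
  ultimately show "eventually (\<lambda>n. dist (a (Suc n)) (metric_proj A (metric_proj B (a n))) \<le> \<epsilon>) sequentially"
  proof eventually_elim
    case (elim n)
    have "dist (metric_proj A (b (Suc n))) (metric_proj A (metric_proj B (a n))) \<le> dist (b (Suc n)) (metric_proj B (a n))"
      by (rule metric_proj_nonexpansive[OF closed_A convex_A nonempty_A])
    then show ?case
      using elim dist_triangle[of "a (Suc n)" "metric_proj A (metric_proj B (a n))" "metric_proj A (b (Suc n))"]
      unfolding a_Suc by fastforce
  qed
qed simp

lemma infdist_a_A_tendsto: "(\<lambda>n. infdist (a n) A) \<longlonglongrightarrow> 0"
proof (rule tendsto_zero_if_eventually_le)
  fix \<epsilon> :: real assume "0 < \<epsilon>"
  obtain Ka where Ka: "\<And>n. norm (a n) \<le> Ka" using bounded_range_a by (auto simp: bounded_iff)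
  have "eventually (\<lambda>n. \<forall>x\<in>As n. norm x \<le> Ka \<longrightarrow> infdist x A \<le> \<epsilon>) sequentially"
    using aw_convergesD[OF aw_A \<open>0 < \<epsilon>\<close>, of Ka] by (simp add: eventually_conj_iff)
  moreover have "eventually (\<lambda>n. n \<ge> 1) sequentially" by simp
  ultimately show "eventually (\<lambda>n. infdist (a n) A \<le> \<epsilon>) sequentially"
    by eventually_elim (use a_in Ka in blast)
qed (rule infdist_nonneg)

lemma infdist_a_near_A_tendsto: "(\<lambda>n. infdist (a n) E) \<longlonglongrightarrow> 0"
proof (rule tendsto_zero_by_descent[OF infdist_nonneg dist_a_Suc_alternating_tendsto])
  have "infdist (a (Suc n)) E \<le> infdist (a n) E + dist (a (Suc n)) (metric_proj A (metric_proj B (a n)))" for n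
    using infdist_triangle[of "a (Suc n)" E "metric_proj A (metric_proj B (a n))"]
      infdist_alternating_le[of "a n"] by linarith
  then show "eventually (\<lambda>n. infdist (a (Suc n)) E
      \<le> infdist (a n) E + dist (a (Suc n)) (metric_proj A (metric_proj B (a n)))) sequentially"
    by simp
next
  fix \<epsilon> :: real assume "0 < \<epsilon>"
  obtain \<delta> where "0 < \<delta>" and reg: "\<And>x. infdist x A \<le> \<delta> \<Longrightarrow> infdist (x + v) B \<le> \<delta> \<Longrightarrow> infdist x E \<le> \<epsilon>"
    using regular_coupleD[OF regular \<open>0 < \<epsilon>\<close>] by blast
  have "bounded (range a \<union> E)" using bounded_range_a bounded_near_A by simp
  then obtain L where "\<forall>x\<in>range a \<union> E. \<forall>y\<in>range a \<union> E. dist x y \<le> L"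
    unfolding bounded_two_points by blast
  then have L: "dist (a n) e \<le> max 1 L" if "e \<in> E" for n e
    using that by (simp add: le_max_iff_disj)
  have "eventually (\<lambda>n. infdist (a n) A < \<delta>) sequentially"
    using infdist_a_A_tendsto \<open>0 < \<delta>\<close> by (rule order_tendstoD(2))
  then have "eventually (\<lambda>n. \<epsilon> < infdist (a n) E \<longrightarrow> infdist (a (Suc n)) E
      \<le> infdist (a n) E - \<delta>\<^sup>2 / (2 * max 1 L) + dist (a (Suc n)) (metric_proj A (metric_proj B (a n)))) sequentially"
  proof (rule eventually_mono, intro impI)
    fix n assume "infdist (a n) A < \<delta>" "\<epsilon> < infdist (a n) E"
    then have "\<delta> \<le> infdist (a n + v) B" using reg[of "a n"] by fastforce
    then show "infdist (a (Suc n)) E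
      \<le> infdist (a n) E - \<delta>\<^sup>2 / (2 * max 1 L) + dist (a (Suc n)) (metric_proj A (metric_proj B (a n)))"
      using infdist_alternating_decrease[OF \<open>0 < \<delta>\<close> _ L]
        infdist_triangle[of "a (Suc n)" E "metric_proj A (metric_proj B (a n))"] by fastforce
  qed
  then show "\<exists>\<kappa>>0. eventually (\<lambda>n. \<epsilon> < infdist (a n) E \<longrightarrow> infdist (a (Suc n)) E
      \<le> infdist (a n) E - \<kappa> + dist (a (Suc n)) (metric_proj A (metric_proj B (a n)))) sequentially"
    using \<open>0 < \<delta>\<close> by (intro exI[of _ "\<delta>\<^sup>2 / (2 * max 1 L)"]) auto
qed

lemma infdist_b_near_B_tendsto: "(\<lambda>n. infdist (b n) F) \<longlonglongrightarrow> 0"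
proof (rule LIMSEQ_imp_Suc, rule tendsto_sandwich[OF _ _ tendsto_const])
  show "eventually (\<lambda>n. 0 \<le> infdist (b (Suc n)) F) sequentially"
    by (simp add: infdist_nonneg)
  have "infdist (b (Suc n)) F \<le> infdist (a n) E + dist (b (Suc n)) (metric_proj B (a n))" for n
    using infdist_triangle[of "b (Suc n)" F "metric_proj B (a n)"] infdist_metric_proj_B_near_B_le[of "a n"]
    by linarith
  then show "eventually (\<lambda>n. infdist (b (Suc n)) F \<le> infdist (a n) E + dist (b (Suc n)) (metric_proj B (a n))) sequentially"
    by simp
  show "(\<lambda>n. infdist (a n) E + dist (b (Suc n)) (metric_proj B (a n))) \<longlonglongrightarrow> 0"
    using tendsto_add[OF infdist_a_near_A_tendsto dist_b_Suc_metric_proj_B_tendsto] by simp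
qed

end

theorem theorem4p10:
  fixes A B :: "'a::{real_inner, complete_space} set"
  assumes "closed A" "convex A" "A \<noteq> {}"
      and "closed B" "convex B" "B \<noteq> {}"
      and "near_A A B \<noteq> {}" "near_B A B \<noteq> {}"
      and "bounded (near_A A B)" "bounded (near_B A B)"
      and "regular_couple A B"
  shows "d_stable A B"
  unfolding d_stable_def
proof (intro allI impI; elim conjE)
  fix As Bs :: "nat \<Rightarrow> 'a set" and a0 :: 'a and a b :: "nat \<Rightarrow> 'a"
  assume "\<forall>n\<ge>1. closed (As n) \<and> convex (As n) \<and> As n \<noteq> {} \<and> closed (Bs n) \<and> convex (Bs n) \<and> Bs n \<noteq> {}"
    and "aw_converges As A" "aw_converges Bs B"
    and "\<forall>n\<ge>1. b n = metric_proj (Bs n) (a (n - 1)) \<and> a n = metric_proj (As n) (b n)"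
  then interpret perturbed_alternating_projections A B As Bs a b
    using assms by unfold_locales auto
  show "(\<lambda>n. infdist (a n) (near_A A B)) \<longlonglongrightarrow> 0 \<and> (\<lambda>n. infdist (b n) (near_B A B)) \<longlonglongrightarrow> 0"
    using infdist_a_near_A_tendsto infdist_b_near_B_tendsto by blast
qed

end
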